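(* Fix $\alpha>0$ and $N\ge1$. For $u\in\mathbb{R}$ define the polynomial $P_u:\mathbb{R}^N\to\mathbb{R}$ by $$P_u(v)=-\alpha\left(\frac{|v|^2}{2}-\frac{|v|^4}{4}\right)+\frac{|v|^2}{2}-u v_1,$$ where $v=(v_1,\dots,v_N)$. For every $u>0$ the polynomial $P_u$ attains its global minimum only at the point $v^*(u)=(v_1^*(u),0,\dots,0)$, where $v_1^*(u)$ is a continuous function of $u>0$, is positive for $u>0$, and satisfies $v_1^*(1)=1$. *)

theory Defs
  imports "HOL-Analysis.Analysis"
begin

text \<open>The polynomial P_u on R^N (N = CARD('n)); the coordinate v_1 is the component
  at a distinguished index i1.\<close>
definition P :: "real \<Rightarrow> 'n::finite \<Rightarrow> real \<Rightarrow> real ^ 'n \<Rightarrow> real" where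
  "P \<alpha> i1 u v = - \<alpha> * ((norm v)^2 / 2 - (norm v)^4 / 4) + (norm v)^2 / 2 - u * (v $ i1)"

end

theory Submission
  imports Defs
begin

text \<open>Writing \<open>r = norm v\<close>, one has \<open>P\<^sub>u(v) = f(r) + u (r - v\<^sub>1)\<close> with the radial
  profile \<open>f(r) = \<alpha> r\<^sup>4/4 + (1 - \<alpha>) r\<^sup>2/2 - u r\<close>, and \<open>r - v\<^sub>1 \<ge> 0\<close> with equality exactly
  on the positive \<open>v\<^sub>1\<close>-axis. For \<open>u > 0\<close> the equation \<open>f'(s) = 0\<close>, i.e.
  \<open>\<alpha> s\<^sup>3 + (1 - \<alpha>) s = u\<close>, has a unique positive root \<open>s(u)\<close>, and
  \<open>f(t) - f(s) = (t - s)\<^sup>2 (\<alpha>(t + s)\<^sup>2/4 + (\<alpha> s\<^sup>2 + 1 - \<alpha>)/2)\<close>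
  with a positive second factor, so \<open>s(u)\<close> is the strict global minimiser of \<open>f\<close>. The root \<open>s(u)\<close> is a local inverse
  of the continuous slope function, hence continuous, and \<open>s(1) = 1\<close>.\<close>

definition radial_profile :: "real \<Rightarrow> real \<Rightarrow> real \<Rightarrow> real" where
  "radial_profile a u t = a * t ^ 4 / 4 + (1 - a) * t\<^sup>2 / 2 - u * t"

definition radial_slope :: "real \<Rightarrow> real \<Rightarrow> real" where
  "radial_slope a t = a * t ^ 3 + (1 - a) * t"

definition radial_minimizer :: "real \<Rightarrow> real \<Rightarrow> real" where
  "radial_minimizer a u = (THE s. s > 0 \<and> radial_slope a s = u)"

lemma radial_slope_factor: "radial_slope a t = t * (a * t\<^sup>2 + 1 - a)"
  unfolding radial_slope_def by (simp add: algebra_simps power2_eq_square power3_eq_cube)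

lemma radial_slope_pos_imp_cofactor_pos:
  assumes "t > 0" "radial_slope a t > 0"
  shows "a * t\<^sup>2 + 1 - a > 0"
  using assms by (simp add: radial_slope_factor zero_less_mult_iff)

lemma radial_slope_inj:
  assumes "a > 0" "x > 0" "y > 0" "radial_slope a x > 0"
    and "radial_slope a x = radial_slope a y"
  shows "x = y"
proof (rule ccontr)
  assume "x \<noteq> y"
  have "radial_slope a x - radial_slope a y = (x - y) * (a * (x\<^sup>2 + x * y + y\<^sup>2) + 1 - a)"
    unfolding radial_slope_def by (simp add: algebra_simps power2_eq_square power3_eq_cube)
  with assms(5) \<open>x \<noteq> y\<close> have "a * (x\<^sup>2 + x * y + y\<^sup>2) + 1 - a = 0" by simp
  moreover have "a * x\<^sup>2 + 1 - a > 0" using assms(2,4) by (rule radial_slope_pos_imp_cofactor_pos)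
  moreover have "a * (x * y + y\<^sup>2) > 0"
    using assms(1-3) by (intro mult_pos_pos add_pos_pos) (auto simp: power2_eq_square)
  ultimately show False by (simp add: algebra_simps)
qed

lemma radial_slope_attains:
  assumes "a > 0" "u > 0"
  obtains s where "s > 0" "radial_slope a s = u"
proof -
  have "a * ((1 + u)\<^sup>2 - 1) \<ge> 0"
    using assms by (simp add: power2_eq_square algebra_simps)
  then have "(1 + u) * 1 \<le> (1 + u) * (a * ((1 + u)\<^sup>2 - 1) + 1)"
    using assms by (intro mult_left_mono) auto
  also have "\<dots> = radial_slope a (1 + u)"
    by (simp add: radial_slope_factor algebra_simps)
  finally have "u \<le> radial_slope a (1 + u)" by simp
  moreover have "radial_slope a 0 \<le> u" "continuous_on {0..1 + u} (radial_slope a)"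
    using assms unfolding radial_slope_def by (auto intro!: continuous_intros)
  ultimately obtain s where "0 \<le> s" "radial_slope a s = u"
    using IVT'[of "radial_slope a" 0 u "1 + u"] assms by fastforce
  moreover have "s \<noteq> 0" using calculation assms by (auto simp: radial_slope_def)
  ultimately show ?thesis by (auto intro!: that)
qed

lemma radial_minimizer:
  assumes "a > 0" "u > 0"
  shows "radial_minimizer a u > 0" "radial_slope a (radial_minimizer a u) = u"
proof -
  obtain s where s: "s > 0" "radial_slope a s = u" using radial_slope_attains assms .
  have "radial_minimizer a u = s"
    unfolding radial_minimizer_def
  proof (rule the_equality)
    show "t = s" if "t > 0 \<and> radial_slope a t = u" for t
      using radial_slope_inj[OF assms(1) s(1), of t] that s assms(2) by simp
  qed (use s in simp)
  with s show "radial_minimizer a u > 0" "radial_slope a (radial_minimizer a u) = u" by auto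
qed

lemma radial_minimizer_radial_slope:
  assumes "a > 0" "s > 0" "radial_slope a s > 0"
  shows "radial_minimizer a (radial_slope a s) = s"
  using radial_slope_inj[OF assms(1) radial_minimizer(1)[OF assms(1,3)] assms(2)]
    radial_minimizer(2)[OF assms(1,3)] assms(3) by simp

lemma isCont_radial_minimizer:
  assumes "a > 0" "u > 0"
  shows "isCont (radial_minimizer a) u"
proof -
  define s where "s = radial_minimizer a u"
  have s: "s > 0" "radial_slope a s = u" using radial_minimizer[OF assms] s_def by auto
  define S where "S = {z. 0 < z \<and> 0 < radial_slope a z}"
  have "open S" unfolding S_def radial_slope_def
    by (intro open_Collect_conj open_Collect_less continuous_intros)
  moreover have "s \<in> S" using s assms S_def by auto
  ultimately obtain e where e: "e > 0" "cball s e \<subseteq> S" using open_contains_cball by blast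
  have "isCont (radial_minimizer a) (radial_slope a s)"
  proof (rule isCont_inverse_function[where f = "radial_slope a" and x = s, OF e(1)])
    fix z assume "\<bar>z - s\<bar> \<le> e"
    then have "z \<in> S" using e(2) by (auto simp: dist_real_def abs_minus_commute)
    then show "radial_minimizer a (radial_slope a z) = z"
      using radial_minimizer_radial_slope assms S_def by auto
  qed (unfold radial_slope_def, intro continuous_intros)
  with s show ?thesis by simp
qed

lemma radial_profile_diff:
  "radial_profile a (radial_slope a s) t - radial_profile a (radial_slope a s) s
     = (t - s)\<^sup>2 * (a / 4 * (t + s)\<^sup>2 + (a * s\<^sup>2 + 1 - a) / 2)"
  unfolding radial_profile_def radial_slope_def
  by (simp add: field_simps power2_eq_square power3_eq_cube power4_eq_xxxx)

lemma radial_profile_strict_min: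
  assumes "a > 0" "s > 0" "radial_slope a s = u" "u > 0" "t \<noteq> s"
  shows "radial_profile a u s < radial_profile a u t"
proof -
  have "a * s\<^sup>2 + 1 - a > 0" using assms(2-4) radial_slope_pos_imp_cofactor_pos by simp
  then have "a / 4 * (t + s)\<^sup>2 + (a * s\<^sup>2 + 1 - a) / 2 > 0"
    using assms(1) by (simp add: add_nonneg_pos)
  with assms(5) have "(t - s)\<^sup>2 * (a / 4 * (t + s)\<^sup>2 + (a * s\<^sup>2 + 1 - a) / 2) > 0" by simp
  with radial_profile_diff[of a s t] assms(3) show ?thesis by simp
qed

lemma P_eq_radial_profile:
  "P a i u v = radial_profile a u (norm v) + u * (norm v - v $ i)"
  unfolding P_def radial_profile_def by (simp add: field_simps)

lemma norm_axis: "norm (axis i c :: real ^ 'n::finite) = \<bar>c\<bar>"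
  by (simp add: norm_eq_sqrt_inner inner_axis_axis)

lemma norm_diff_axis_component:
  fixes v :: "real ^ 'n::finite"
  shows "(norm (v - axis i (v $ i)))\<^sup>2 = (norm v)\<^sup>2 - (v $ i)\<^sup>2"
  unfolding power2_norm_eq_inner
  by (simp add: inner_diff_left inner_diff_right inner_axis inner_axis' inner_axis_axis
      power2_eq_square)

lemma component_eq_norm_imp_axis:
  fixes v :: "real ^ 'n::finite"
  assumes "v $ i = norm v"
  shows "v = axis i (norm v)"
  using norm_diff_axis_component[of v i] assms by simp

lemma P_minimizers_eq_axis:
  fixes i :: "'n::finite"
  assumes "a > 0" "u > 0" "s > 0" "radial_slope a s = u"
  shows "{v :: real ^ 'n. \<forall>w. P a i u v \<le> P a i u w} = {axis i s}"
proof -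
  have slack: "u * (norm w - w $ i) \<ge> 0" for w :: "real ^ 'n"
    using component_le_norm_cart[of w i] assms(2) by simp
  have P_axis: "P a i u (axis i s) = radial_profile a u s"
    using assms(3) by (simp add: P_eq_radial_profile norm_axis)
  have profile_min: "radial_profile a u s \<le> radial_profile a u t" for t
    using radial_profile_strict_min[OF assms(1,3,4,2), of t] by (cases "t = s") auto
  have minimal: "P a i u (axis i s) \<le> P a i u w" for w :: "real ^ 'n"
    using profile_min[of "norm w"] slack[of w]
    unfolding P_axis P_eq_radial_profile[of a i u w] by linarith
  have "v = axis i s" if "P a i u v \<le> P a i u (axis i s)" for v :: "real ^ 'n"
  proof -
    have "norm v = s"
      using that slack[of v] radial_profile_strict_min[OF assms(1,3,4,2), of "norm v"]
      unfolding P_axis P_eq_radial_profile[of a i u v] by fastforce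
    moreover have "v $ i = norm v"
      using that slack[of v] profile_min[of "norm v"] assms(2)
      unfolding P_axis P_eq_radial_profile[of a i u v] \<open>norm v = s\<close> by simp
    ultimately show ?thesis using component_eq_norm_imp_axis by metis
  qed
  with minimal show ?thesis by auto
qed

theorem lemma2p7:
  fixes \<alpha> :: real and i1 :: "'n::finite"
  assumes "\<alpha> > 0"
  shows "\<exists>v1 :: real \<Rightarrow> real.
           continuous_on {0<..} v1 \<and> (\<forall>u>0. v1 u > 0) \<and> v1 1 = 1 \<and>
           (\<forall>u>0. {v :: real ^ 'n. \<forall>w. P \<alpha> i1 u v \<le> P \<alpha> i1 u w} = {axis i1 (v1 u)})"
proof (intro exI[of _ "radial_minimizer \<alpha>"] conjI allI impI)
  show "continuous_on {0<..} (radial_minimizer \<alpha>)"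
    using isCont_radial_minimizer[OF assms] by (intro continuous_at_imp_continuous_on) auto
  show "radial_minimizer \<alpha> u > 0" if "u > 0" for u
    using radial_minimizer[OF assms that] by simp
  show "radial_minimizer \<alpha> 1 = 1"
    using radial_minimizer_radial_slope[OF assms, of 1] by (simp add: radial_slope_def)
  show "{v. \<forall>w. P \<alpha> i1 u v \<le> P \<alpha> i1 u w} = {axis i1 (radial_minimizer \<alpha> u)}" if "u > 0" for u
    using P_minimizers_eq_axis[OF assms that radial_minimizer[OF assms that]] .
qed

end
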